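(* Let $\boldsymbol{\lambda}=(\lambda_k)_{k\in\mathbb{N}_0}$ be a sequence of positive reals with $0\le\lambda_0<1$ and $\sum_{k=0}^{\infty}\lambda_k^2=1$, and let $\beta:=\sup\{\lambda_0^2,\ \lambda_k^2/2 : k\in\mathbb{N}\}$. Then $\beta\in(0,1)$, and for every $d\in\mathbb{N}$ and $n\in\mathbb{N}_0$, while the initial error of $\mathrm{App}:\mathcal{H}_{\boldsymbol{\lambda}}(\mathbb{T}^d)\hookrightarrow L_\infty(\mathbb{T}^d)$ equals $1$, \[ e^{\mathrm{det}}\bigl(n,\mathcal{H}_{\boldsymbol{\lambda}}(\mathbb{T}^d)\hookrightarrow L_\infty(\mathbb{T}^d)\bigr)\ge\sqrt{(1-n\,\beta^d)_+}. \] Consequently, for every $\varepsilon\in(0,1)$, \[ n^{\mathrm{det}}\bigl(\varepsilon,\mathcal{H}_{\boldsymbol{\lambda}}(\mathbb{T}^d)\hookrightarrow L_\infty(\mathbb{T}^d)\bigr)\ge\beta^{-d}(1-\varepsilon)^2, \] so the problem suffers from the curse of dimensionality in the deterministic setting. In particular this holds for the Korobov spaces $\mathcal{H}^{\mathrm{Kor}}_r(\mathbb{T}^d)$ (with $r>1/2$, $\beta_0,\beta_1>0$, $\beta_0+\beta_1\zeta(2r)=1$) with $\beta=\sup\{\beta_0,\beta_1/2\}$.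
   Context: $\mathbb{T}=[0,1)$ is the one-dimensional torus (endpoints identified), $\mathbb{T}^d$ the $d$-torus with Lebesgue measure. For $\boldsymbol{\lambda}=(\lambda_k)_{k\in\mathbb{N}_0}\subset(0,\infty)$, $\mathcal{H}_{\boldsymbol{\lambda}}(\mathbb{T})$ is the real Hilbert space of functions on $\mathbb{T}$ having the orthonormal basis $\psi_0:=\lambda_0$, $\psi_{-k}:=\lambda_k\sin(2\pi k\,\cdot)$, $\psi_k:=\lambda_k\cos(2\pi k\,\cdot)$, $k\in\mathbb{N}$. $\mathcal{H}_{\boldsymbol{\lambda}}(\mathbb{T}^d)$ is the (unweighted) tensor product space with orthonormal basis $\psi_{\mathbf{k}}(\mathbf{x})=\prod_{j=1}^d\psi_{k_j}(x_j)$, $\mathbf{k}\in\mathbb{Z}^d$; its reproducing kernel is $K(\mathbf{x},\mathbf{y})=\prod_{j=1}^d\sum_{k=0}^\infty\lambda_k^2\cos(2\pi k(x_j-y_j))$. The Korobov space $\mathcal{H}^{\mathrm{Kor}}_r(\mathbb{T}^d)$ is $\mathcal{H}_{\boldsymbol{\lambda}}(\mathbb{T}^d)$ with $\lambda_0=\sqrt{\beta_0}$, $\lambda_k=\sqrt{\beta_1}\,k^{-r}$ ($k\in\mathbb{N}$); $\zeta$ is the Riemann zeta function. $a_+:=\max\{a,0\}$. Deterministic setting with linear information: a method is $A_n=\phi\circ N$ with $N(f)=(L_1(f),\ldots,L_n(f))$ for continuous linear functionals $L_i$ on the input space and arbitrary $\phi:\mathbb{R}^n\to L_\infty(\mathbb{T}^d)$;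 its error is $\sup_{\|f\|\le1}\|f-A_n(f)\|_{L_\infty}$; $e^{\mathrm{det}}(n,\cdot)$ is the infimum of this error over all such methods, and $n^{\mathrm{det}}(\varepsilon,\cdot)$ is the minimal $n\in\mathbb{N}_0$ for which some such method has error at most $\varepsilon$. The initial error is the operator norm of the embedding. *)

theory Defs
  imports "HOL-Analysis.Analysis" "HOL-Probability.Essential_Supremum"
begin

definition psi1 :: "(nat \<Rightarrow> real) \<Rightarrow> int \<Rightarrow> real \<Rightarrow> real" where
  "psi1 lam k x =
     (if k = 0 then lam 0
      else if k < 0 then lam (nat (-k)) * sin (2 * pi * real_of_int (-k) * x)
      else lam (nat k) * cos (2 * pi * real_of_int k * x))"

text \<open>Tensor product basis psi_k(x) = prod_j psi_{k_j}(x_j), k in Z^d; d = CARD('d).\<close>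
definition psi :: "(nat \<Rightarrow> real) \<Rightarrow> int^'d \<Rightarrow> real^'d \<Rightarrow> real" where
  "psi lam k x = (\<Prod>j\<in>UNIV. psi1 lam (k $ j) (x $ j))"

text \<open>The torus T^d = [0,1)^d (as a fundamental domain) with Lebesgue measure.\<close>
definition torus :: "(real^'d) set" where
  "torus = {x. \<forall>j. 0 \<le> x $ j \<and> x $ j < 1}"

definition Tmeas :: "(real^'d) measure" where
  "Tmeas = lebesgue_on torus"

definition series :: "(nat \<Rightarrow> real) \<Rightarrow> (int^'d \<Rightarrow> real) \<Rightarrow> real^'d \<Rightarrow> real" where
  "series lam c = (\<lambda>x. \<Sum>\<^sub>\<infinity>k. c k * psi lam k x)"

definition l2coeff :: "(int^'d \<Rightarrow> real) \<Rightarrow> bool" where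
  "l2coeff c \<longleftrightarrow> (\<lambda>k. (c k)\<^sup>2) summable_on UNIV"

definition Hspace :: "(nat \<Rightarrow> real) \<Rightarrow> (real^'d \<Rightarrow> real) set" where
  "Hspace lam = {f. \<exists>c. l2coeff c \<and> f = series lam c}"

definition Hnorm :: "(nat \<Rightarrow> real) \<Rightarrow> (real^'d \<Rightarrow> real) \<Rightarrow> real" where
  "Hnorm lam f = Inf {sqrt (\<Sum>\<^sub>\<infinity>k. (c k)\<^sup>2) | c. l2coeff c \<and> f = series lam c}"

definition Hball :: "(nat \<Rightarrow> real) \<Rightarrow> (real^'d \<Rightarrow> real) set" where
  "Hball lam = {f \<in> Hspace lam. Hnorm lam f \<le> 1}"

definition clf :: "(nat \<Rightarrow> real) \<Rightarrow> ((real^'d \<Rightarrow> real) \<Rightarrow> real) \<Rightarrow> bool" where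
  "clf lam L \<longleftrightarrow>
     (\<forall>f\<in>Hspace lam. \<forall>g\<in>Hspace lam. \<forall>a b.
         L (\<lambda>x. a * f x + b * g x) = a * L f + b * L g) \<and>
     (\<exists>C. \<forall>f\<in>Hspace lam. \<bar>L f\<bar> \<le> C * Hnorm lam f)"

definition Linf_norm :: "(real^'d \<Rightarrow> real) \<Rightarrow> ereal" where
  "Linf_norm f = esssup Tmeas (\<lambda>x. ereal \<bar>f x\<bar>)"

text \<open>Admissible deterministic methods A_n = phi o N with linear information
  N(f) = (L_0 f, ..., L_{n-1} f), phi mapping into L_infinity(T^d).\<close>
definition admissible ::
  "(nat \<Rightarrow> real) \<Rightarrow> nat \<Rightarrow> (nat \<Rightarrow> (real^'d \<Rightarrow> real) \<Rightarrow> real) \<Rightarrow> (real list \<Rightarrow> real^'d \<Rightarrow> real) \<Rightarrow> bool"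
  where
  "admissible lam n L phi \<longleftrightarrow>
     (\<forall>i<n. clf lam (L i)) \<and>
     (\<forall>y. length y = n \<longrightarrow> phi y \<in> borel_measurable Tmeas \<and> Linf_norm (phi y) < \<infinity>)"

definition method_error ::
  "(nat \<Rightarrow> real) \<Rightarrow> nat \<Rightarrow> (nat \<Rightarrow> (real^'d \<Rightarrow> real) \<Rightarrow> real) \<Rightarrow> (real list \<Rightarrow> real^'d \<Rightarrow> real) \<Rightarrow> ereal"
  where
  "method_error lam n L phi =
     (SUP f\<in>Hball lam. Linf_norm (\<lambda>x. f x - phi (map (\<lambda>i. L i f) [0..<n]) x))"

definition e_det :: "'d::finite itself \<Rightarrow> (nat \<Rightarrow> real) \<Rightarrow> nat \<Rightarrow> ereal" where
  "e_det _ lam n =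
     (INF Lphi\<in>{(L :: nat \<Rightarrow> (real^'d \<Rightarrow> real) \<Rightarrow> real, phi). admissible lam n L phi}.
        method_error lam n (fst Lphi) (snd Lphi))"

definition n_det :: "'d::finite itself \<Rightarrow> (nat \<Rightarrow> real) \<Rightarrow> real \<Rightarrow> enat" where
  "n_det _ lam eps =
     (INF n\<in>{n. \<exists>(L :: nat \<Rightarrow> (real^'d \<Rightarrow> real) \<Rightarrow> real) phi.
                 admissible lam n L phi \<and> method_error lam n L phi \<le> ereal eps}. enat n)"

definition initial_error :: "'d::finite itself \<Rightarrow> (nat \<Rightarrow> real) \<Rightarrow> ereal" where
  "initial_error _ lam = (SUP f\<in>(Hball lam :: (real^'d \<Rightarrow> real) set). Linf_norm f)"

definition beta :: "(nat \<Rightarrow> real) \<Rightarrow> real" where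
  "beta lam = Sup (insert ((lam 0)\<^sup>2) {(lam k)\<^sup>2 / 2 | k. k \<ge> 1})"

definition kor_lambda :: "real \<Rightarrow> real \<Rightarrow> real \<Rightarrow> nat \<Rightarrow> real" where
  "kor_lambda r b0 b1 k = (if k = 0 then sqrt b0 else sqrt b1 * real k powr (-r))"

definition det_lower_bounds :: "'d::finite itself \<Rightarrow> (nat \<Rightarrow> real) \<Rightarrow> real \<Rightarrow> bool" where
  "det_lower_bounds T lam b \<longleftrightarrow>
     initial_error T lam = 1 \<and>
     (\<forall>n. ereal (sqrt (max 0 (1 - real n * b ^ CARD('d)))) \<le> e_det T lam n) \<and>
     (\<forall>eps. 0 < eps \<and> eps < 1 \<longrightarrow>
        ereal (inverse (b ^ CARD('d)) * (1 - eps)\<^sup>2) \<le> ereal_of_enat (n_det T lam eps))"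

end

theory Submission
  imports Defs
begin

text \<open>On the grid of \<open>(2N+1)\<^sup>d\<close> equidistant points of the torus the basis functions
  \<open>psi lam k\<close>, \<open>k \<in> {-N..N}\<^sup>d\<close>, are orthogonal, and the grid sum of \<open>(psi lam k)\<^sup>2\<close> is at most
  \<open>(2N+1)\<^sup>d \<beta>\<^sup>d\<close>, while \<open>\<Sum>k. (psi lam k x)\<^sup>2 = (\<Sum>i\<le>N. \<lambda>\<^sub>i\<^sup>2)\<^sup>d\<close> tends to \<open>1\<close> at every
  point. Project the vectors \<open>(psi lam k x)\<^sub>k\<close> onto the span of the \<open>n\<close> information
  functionals: by orthogonality these projections have mean square norm at most \<open>n \<beta>\<^sup>d\<close> over
  the grid, so at some grid point the orthogonal residual has squared norm close to
  \<open>1 - n \<beta>\<^sup>d\<close>. Normalised, it is the coefficient vector of a unit-ball function \<open>f\<close> with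
  zero information and \<open>f x > t\<close>; by continuity, \<open>f\<close> or \<open>-f\<close> differs by more than \<open>t\<close> from the
  output of the method for zero information on a set of positive measure. Inverting this
  bound with \<open>(1 - \<epsilon>)\<^sup>2 \<le> 1 - \<epsilon>\<^sup>2\<close> gives the bound on \<open>n_det\<close>.\<close>

section \<open>Discrete orthogonality of the trigonometric system\<close>

definition grid_angle :: "nat \<Rightarrow> int \<Rightarrow> nat \<Rightarrow> real" where
  "grid_angle M j m = 2 * pi * real_of_int j * (real m / real M)"

lemma grid_angle_add: "grid_angle M p m + grid_angle M q m = grid_angle M (p + q) m"
  and grid_angle_diff: "grid_angle M p m - grid_angle M q m = grid_angle M (p - q) m"
  by (simp_all add: grid_angle_def algebra_simps)

lemma sum_cis_grid_angle:
  assumes "M > 0"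
  shows "(\<Sum>m<M. cis (grid_angle M j m)) = (if int M dvd j then of_nat M else 0)"
proof -
  define z where "z = cis (2 * pi * real_of_int j / real M)"
  have powers: "cis (grid_angle M j m) = z ^ m" for m
    unfolding z_def Complex.DeMoivre grid_angle_def by (simp add: field_simps)
  show ?thesis
  proof (cases "int M dvd j")
    case True
    then obtain q where q: "j = int M * q" by blast
    have "2 * pi * real_of_int j / real M = 2 * pi * real_of_int q"
      using assms by (simp add: q)
    then have "z = 1" unfolding z_def by (simp only:) (rule cis_multiple_2pi, simp)
    then have "cis (grid_angle M j m) = 1" for m by (simp add: powers)
    with True show ?thesis by simp
  next
    case False
    have "z \<noteq> 1"
    proof
      assume "z = 1"
      then have "cos (2 * pi * real_of_int j / real M) = 1"
        by (metis cis.sel(1) one_complex.sel(1) z_def)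
      then obtain q :: int where "2 * pi * real_of_int j / real M = real_of_int q * 2 * pi"
        using cos_one_2pi_int by blast
      then have "real_of_int j = real_of_int q * real M" using assms by (simp add: field_simps)
      then have "j = q * int M" by (metis of_int_eq_iff of_int_mult of_int_of_nat_eq)
      then show False using False by simp
    qed
    moreover have "z ^ M = 1"
      using assms by (simp add: z_def Complex.DeMoivre)
    ultimately show ?thesis using False by (simp add: powers sum_gp_strict)
  qed
qed

lemma sum_cos_grid_angle:
  assumes "M > 0"
  shows "(\<Sum>m<M. cos (grid_angle M j m)) = (if int M dvd j then real M else 0)"
proof -
  have "(\<Sum>m<M. cos (grid_angle M j m)) = Re (\<Sum>m<M. cis (grid_angle M j m))" by simp
  also have "\<dots> = (if int M dvd j then real M else 0)"
    unfolding sum_cis_grid_angle[OF assms] by simp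
  finally show ?thesis .
qed

lemma sum_sin_grid_angle:
  assumes "M > 0"
  shows "(\<Sum>m<M. sin (grid_angle M j m)) = 0"
proof -
  have "(\<Sum>m<M. sin (grid_angle M j m)) = Im (\<Sum>m<M. cis (grid_angle M j m))" by simp
  also have "\<dots> = 0"
    unfolding sum_cis_grid_angle[OF assms] by simp
  finally show ?thesis .
qed

lemma int_dvd_small_iff:
  assumes "\<bar>j\<bar> < int M"
  shows "int M dvd j \<longleftrightarrow> j = 0"
proof
  assume dvd: "int M dvd j"
  show "j = 0"
  proof (rule ccontr)
    assume "j \<noteq> 0"
    then have "\<bar>int M\<bar> \<le> \<bar>j\<bar>" using dvd by (rule dvd_imp_le_int)
    then show False using assms by simp
  qed
qed simp

lemma sum_cos_cos_grid_angle:
  "(\<Sum>m<M. cos (grid_angle M p m) * cos (grid_angle M q m)) =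
     ((\<Sum>m<M. cos (grid_angle M (p - q) m)) + (\<Sum>m<M. cos (grid_angle M (p + q) m))) / 2"
  unfolding cos_times_cos grid_angle_add grid_angle_diff
  by (simp add: sum.distrib flip: sum_divide_distrib)

lemma sum_sin_sin_grid_angle:
  "(\<Sum>m<M. sin (grid_angle M p m) * sin (grid_angle M q m)) =
     ((\<Sum>m<M. cos (grid_angle M (p - q) m)) - (\<Sum>m<M. cos (grid_angle M (p + q) m))) / 2"
  unfolding sin_times_sin grid_angle_add grid_angle_diff
  by (simp add: sum_subtractf flip: sum_divide_distrib)

lemma sum_sin_cos_grid_angle:
  "(\<Sum>m<M. sin (grid_angle M p m) * cos (grid_angle M q m)) =
     ((\<Sum>m<M. sin (grid_angle M (p + q) m)) + (\<Sum>m<M. sin (grid_angle M (p - q) m))) / 2"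
  unfolding sin_times_cos grid_angle_add grid_angle_diff
  by (simp add: sum.distrib flip: sum_divide_distrib)

lemma sum_cos_sin_grid_angle:
  "(\<Sum>m<M. cos (grid_angle M p m) * sin (grid_angle M q m)) =
     ((\<Sum>m<M. sin (grid_angle M (p + q) m)) - (\<Sum>m<M. sin (grid_angle M (p - q) m))) / 2"
  unfolding cos_times_sin grid_angle_add grid_angle_diff
  by (simp add: sum_subtractf flip: sum_divide_distrib)

text \<open>The mean square of \<open>psi1 lam k\<close> over the torus, and also over every grid of
  \<open>2N + 1\<close> equidistant points with \<open>|k| \<le> N\<close>.\<close>
definition psi1_msq :: "(nat \<Rightarrow> real) \<Rightarrow> int \<Rightarrow> real" where
  "psi1_msq lam k = (if k = 0 then (lam 0)\<^sup>2 else (lam (nat \<bar>k\<bar>))\<^sup>2 / 2)"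

lemma psi1_grid:
  "psi1 lam k (real m / real M) =
    (if k = 0 then lam 0 else if k < 0 then lam (nat (-k)) * sin (grid_angle M (-k) m)
     else lam (nat k) * cos (grid_angle M k m))"
  by (simp add: psi1_def grid_angle_def)

lemma sum_psi1_psi1_grid:
  assumes M: "M = 2 * N + 1" and k: "\<bar>k\<bar> \<le> int N" and l: "\<bar>l\<bar> \<le> int N"
  shows "(\<Sum>m<M. psi1 lam k (real m / real M) * psi1 lam l (real m / real M)) =
         (if k = l then real M * psi1_msq lam k else 0)"
proof -
  have M0: "M > 0" using M by simp
  have C: "(\<Sum>m<M. cos (grid_angle M p m)) = (if p = 0 then real M else 0)"
    if "\<bar>p\<bar> \<le> 2 * int N" for p
  proof -
    have "int M = 2 * int N + 1" using M by simp
    then have "\<bar>p\<bar> < int M" using that by linarith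
    then show ?thesis by (simp add: sum_cos_grid_angle[OF M0] int_dvd_small_iff)
  qed
  note S = sum_sin_grid_angle[OF M0]
  have const: "(\<Sum>m<M. (a * f m) * (b * g m)) = a * b * (\<Sum>m<M. f m * g m)"
    "(\<Sum>m<M. a * (b * g m)) = a * b * (\<Sum>m<M. g m)"
    "(\<Sum>m<M. (a * f m) * b) = a * b * (\<Sum>m<M. f m)" for a b :: real and f g
    by (simp_all add: sum_distrib_left sum_distrib_right mult_ac)
  have bounds: "\<bar>p + q\<bar> \<le> 2 * int N" "\<bar>p - q\<bar> \<le> 2 * int N"
    if "\<bar>p\<bar> \<le> int N" "\<bar>q\<bar> \<le> int N" for p q
    using that by auto
  have kl: "\<bar>- k\<bar> \<le> int N" "\<bar>- l\<bar> \<le> int N" using k l by simp_all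
  note simps = psi1_grid const S sum_sin_sin_grid_angle sum_cos_cos_grid_angle
    sum_sin_cos_grid_angle sum_cos_sin_grid_angle psi1_msq_def power2_eq_square
  show ?thesis
  proof (cases rule: linorder_cases[of k 0]; cases rule: linorder_cases[of l 0])
    assume "k < 0" "l < 0"
    then show ?thesis
      using C[OF bounds(1)[OF kl]] C[OF bounds(2)[OF kl]] by (simp add: simps)
  next
    assume "k < 0" "l = 0"
    then show ?thesis by (simp add: simps)
  next
    assume "k < 0" "l > 0"
    then show ?thesis by (simp add: simps)
  next
    assume "k = 0" "l < 0"
    then show ?thesis by (simp add: simps)
  next
    assume "k = 0" "l = 0"
    then show ?thesis by (simp add: simps)
  next
    assume "k = 0" "l > 0"
    then show ?thesis using C[OF bounds(1)[OF k l]] by (simp add: simps)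
  next
    assume "k > 0" "l < 0"
    then show ?thesis by (simp add: simps)
  next
    assume "k > 0" "l = 0"
    then show ?thesis using C[OF bounds(1)[OF k l]] by (simp add: simps)
  next
    assume "k > 0" "l > 0"
    then show ?thesis
      using C[OF bounds(1)[OF k l]] C[OF bounds(2)[OF k l]] by (simp add: simps)
  qed
qed

lemma vec_Pi_eq_image_PiE:
  "{k::'a^'d::finite. \<forall>j. k $ j \<in> A j} = vec_lambda ` PiE UNIV A"
proof (intro set_eqI iffI)
  fix k :: "'a^'d" assume "k \<in> {k. \<forall>j. k $ j \<in> A j}"
  then have "(\<lambda>j. k $ j) \<in> PiE UNIV A" by auto
  then show "k \<in> vec_lambda ` PiE UNIV A" by (metis image_eqI vec_nth_inverse)
qed auto

lemma inj_on_vec_lambda: "inj_on (vec_lambda :: ('d::finite \<Rightarrow> 'a) \<Rightarrow> 'a^'d) (PiE UNIV A)"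
  by (intro inj_onI) (metis vec_lambda_inverse UNIV_I)

lemma finite_vec_Pi: "(\<And>j. finite (A j)) \<Longrightarrow> finite {k::'a^'d::finite. \<forall>j. k $ j \<in> A j}"
  unfolding vec_Pi_eq_image_PiE by (intro finite_imageI finite_PiE) auto

lemma card_vec_Pi: "card {k::'a^'d::finite. \<forall>j. k $ j \<in> A} = card A ^ CARD('d)"
  unfolding vec_Pi_eq_image_PiE by (simp add: card_image[OF inj_on_vec_lambda] card_PiE)

lemma prod_sum_vec_Pi:
  fixes g :: "'d::finite \<Rightarrow> 'a \<Rightarrow> 'c::comm_semiring_1"
  assumes "\<And>j. finite (A j)"
  shows "(\<Prod>j\<in>UNIV. \<Sum>i\<in>A j. g j i) = (\<Sum>k\<in>{k::'a^'d. \<forall>j. k $ j \<in> A j}. \<Prod>j\<in>UNIV. g j (k $ j))"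
proof -
  have "(\<Prod>j\<in>UNIV. \<Sum>i\<in>A j. g j i) = (\<Sum>p\<in>PiE UNIV A. \<Prod>j\<in>UNIV. g j (p j))"
    using assms by (intro prod_sum_PiE) auto
  also have "\<dots> = (\<Sum>k\<in>vec_lambda ` PiE UNIV A. \<Prod>j\<in>UNIV. g j (k $ j))"
    by (subst sum.reindex[OF inj_on_vec_lambda]) simp
  finally show ?thesis unfolding vec_Pi_eq_image_PiE .
qed

definition grid1 :: "nat \<Rightarrow> real set" where
  "grid1 M = (\<lambda>m. real m / real M) ` {..<M}"

definition grid :: "nat \<Rightarrow> (real^'d) set" where
  "grid M = {x. \<forall>j. x $ j \<in> grid1 M}"

definition freq_box :: "nat \<Rightarrow> (int^'d) set" where
  "freq_box N = {k. \<forall>j. k $ j \<in> {-int N..int N}}"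

definition psi_msq :: "(nat \<Rightarrow> real) \<Rightarrow> int^'d \<Rightarrow> real" where
  "psi_msq lam k = (\<Prod>j\<in>UNIV. psi1_msq lam (k $ j))"

lemma mem_freq_box: "k \<in> freq_box N \<longleftrightarrow> (\<forall>j. \<bar>k $ j\<bar> \<le> int N)"
  unfolding freq_box_def by (simp add: abs_le_iff minus_le_iff conj_commute)

lemma inj_on_grid1: "M > 0 \<Longrightarrow> inj_on (\<lambda>m. real m / real M) {..<M}"
  by (intro inj_onI) (auto simp: field_simps)

lemma sum_grid1: "M > 0 \<Longrightarrow> (\<Sum>t\<in>grid1 M. f t) = (\<Sum>m<M. f (real m / real M))"
  unfolding grid1_def by (simp add: sum.reindex inj_on_grid1)

lemma finite_grid: "finite (grid M :: (real^'d::finite) set)"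
  unfolding grid_def by (rule finite_vec_Pi) (simp add: grid1_def)

lemma card_grid: "M > 0 \<Longrightarrow> card (grid M :: (real^'d::finite) set) = M ^ CARD('d)"
  unfolding grid_def card_vec_Pi grid1_def by (simp add: card_image inj_on_grid1)

lemma grid1_subset: "grid1 M \<subseteq> {0..<1}"
  by (auto simp: grid1_def)

lemma grid_subset_torus: "grid M \<subseteq> (torus :: (real^'d::finite) set)"
  using grid1_subset by (fastforce simp: grid_def torus_def)

lemma finite_freq_box: "finite (freq_box N :: (int^'d::finite) set)"
  unfolding freq_box_def by (rule finite_vec_Pi) simp

lemma freq_box_mono: "N \<le> N' \<Longrightarrow> freq_box N \<subseteq> (freq_box N' :: (int^'d::finite) set)"
  by (auto simp: mem_freq_box) (meson of_nat_le_iff order_trans)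

lemma finite_subset_freq_box:
  assumes "finite (X :: (int^'d::finite) set)"
  obtains N where "X \<subseteq> freq_box N"
proof
  define N where "N = (\<Sum>k\<in>X. \<Sum>j\<in>UNIV. nat \<bar>k $ j\<bar>)"
  show "X \<subseteq> freq_box N"
  proof
    fix k assume k: "k \<in> X"
    have "nat \<bar>k $ j\<bar> \<le> N" for j
    proof -
      have "nat \<bar>k $ j\<bar> \<le> (\<Sum>j\<in>UNIV. nat \<bar>k $ j\<bar>)" by (rule member_le_sum) auto
      also have "\<dots> \<le> N" unfolding N_def using k assms by (intro member_le_sum) auto
      finally show ?thesis .
    qed
    then have "\<bar>k $ j\<bar> \<le> int N" for j by (simp add: nat_le_iff)
    then show "k \<in> freq_box N" by (simp add: mem_freq_box)
  qed
qed

lemma sum_psi_psi_grid: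
  fixes k l :: "int^'d::finite"
  assumes M: "M = 2 * N + 1" and k: "k \<in> freq_box N" and l: "l \<in> freq_box N"
  shows "(\<Sum>x\<in>grid M. psi lam k x * psi lam l x) =
    (if k = l then real M ^ CARD('d) * psi_msq lam k else 0)"
proof -
  have "(\<Sum>x\<in>grid M. psi lam k x * psi lam l x) =
        (\<Sum>x\<in>grid M. \<Prod>j\<in>UNIV. psi1 lam (k $ j) (x $ j) * psi1 lam (l $ j) (x $ j))"
    by (simp add: psi_def prod.distrib)
  also have "\<dots> = (\<Prod>j\<in>UNIV. \<Sum>t\<in>grid1 M. psi1 lam (k $ j) t * psi1 lam (l $ j) t)"
    unfolding grid_def by (rule prod_sum_vec_Pi[symmetric]) (simp add: grid1_def)
  also have "\<dots> = (\<Prod>j\<in>UNIV. if k $ j = l $ j then real M * psi1_msq lam (k $ j) else 0)"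
  proof (intro prod.cong refl)
    fix j
    have "\<bar>k $ j\<bar> \<le> int N" "\<bar>l $ j\<bar> \<le> int N" using k l by (simp_all add: mem_freq_box)
    then show "(\<Sum>t\<in>grid1 M. psi1 lam (k $ j) t * psi1 lam (l $ j) t) =
       (if k $ j = l $ j then real M * psi1_msq lam (k $ j) else 0)"
      using M by (simp only: sum_grid1 sum_psi1_psi1_grid)
  qed
  also have "\<dots> = (if k = l then real M ^ CARD('d) * psi_msq lam k else 0)"
  proof (cases "k = l")
    case False
    then obtain j where "k $ j \<noteq> l $ j" by (metis vec_eq_iff)
    then show ?thesis using False by (intro trans[OF prod_zero]) auto
  qed (simp add: psi_msq_def prod.distrib)
  finally show ?thesis .
qed

lemma sum_psi1_sq_sym_interval:
  "(\<Sum>i\<in>{-int N..int N}. (psi1 lam i y)\<^sup>2) = (\<Sum>i\<le>N. (lam i)\<^sup>2)"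
proof (induction N)
  case 0
  then show ?case by (simp add: psi1_def)
next
  case (Suc N)
  have split: "{-int (Suc N)..int (Suc N)} = insert (int N + 1) (insert (-(int N + 1)) {-int N..int N})"
    by auto
  have "psi1 lam (int N + 1) y = lam (Suc N) * cos (2 * pi * (1 + real N) * y)"
    "psi1 lam (-(int N + 1)) y = lam (Suc N) * sin (2 * pi * (1 + real N) * y)"
    by (simp_all add: psi1_def nat_add_distrib algebra_simps)
  then have "(psi1 lam (int N + 1) y)\<^sup>2 + (psi1 lam (-(int N + 1)) y)\<^sup>2 = (lam (Suc N))\<^sup>2"
    by (metis distrib_left mult.right_neutral power_mult_distrib sin_cos_squared_add2)
  then show ?case using Suc split by simp
qed

lemma sum_psi_sq_freq_box:
  "(\<Sum>k\<in>freq_box N. (psi lam k (x::real^'d::finite))\<^sup>2) = (\<Sum>i\<le>N. (lam i)\<^sup>2) ^ CARD('d)"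
proof -
  have "(\<Sum>k\<in>freq_box N. (psi lam k x)\<^sup>2) =
      (\<Sum>k\<in>freq_box N. \<Prod>j\<in>UNIV. (psi1 lam (k $ j) (x $ j))\<^sup>2)"
    by (simp add: psi_def prod_power_distrib)
  also have "\<dots> = (\<Prod>j\<in>(UNIV::'d set). \<Sum>i\<in>{-int N..int N}. (psi1 lam i (x $ j))\<^sup>2)"
    unfolding freq_box_def by (rule prod_sum_vec_Pi[symmetric]) simp
  finally show ?thesis by (simp add: sum_psi1_sq_sym_interval)
qed

section \<open>Projections in finite dimensions\<close>

definition inner_on :: "'k set \<Rightarrow> ('k \<Rightarrow> real) \<Rightarrow> ('k \<Rightarrow> real) \<Rightarrow> real" where
  "inner_on F u v = (\<Sum>k\<in>F. u k * v k)"

lemma inner_on_commute: "inner_on F u v = inner_on F v u"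
  by (simp add: inner_on_def mult.commute)

lemma inner_on_sum_left:
  "inner_on F (\<lambda>k. \<Sum>i<m. \<alpha> i * a i k) u = (\<Sum>i<m. \<alpha> i * inner_on F (a i) u)"
  unfolding inner_on_def by (simp add: sum_distrib_right sum_distrib_left mult_ac) (rule sum.swap)

lemma inner_on_sum_right:
  "inner_on F u (\<lambda>k. \<Sum>i<m. \<alpha> i * a i k) = (\<Sum>i<m. \<alpha> i * inner_on F u (a i))"
  using inner_on_sum_left[of F \<alpha> a m u] by (simp add: inner_on_commute)

lemma inner_on_diff_left: "inner_on F (\<lambda>k. u k - w k) z = inner_on F u z - inner_on F w z"
  and inner_on_diff_right: "inner_on F z (\<lambda>k. u k - w k) = inner_on F z u - inner_on F z w"
  by (simp_all add: inner_on_def algebra_simps sum_subtractf)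

lemma inner_on_scale_left: "inner_on F (\<lambda>k. c * u k) z = c * inner_on F u z"
  and inner_on_scale_right: "inner_on F z (\<lambda>k. c * u k) = c * inner_on F z u"
  by (simp_all add: inner_on_def sum_distrib_left mult_ac)

lemma inner_on_self_nonneg: "inner_on F u u \<ge> 0"
  by (simp add: inner_on_def sum_nonneg)

lemma inner_on_self_eq_0:
  assumes "finite F" "inner_on F w w = 0" "k \<in> F"
  shows "w k = 0"
  using assms sum_nonneg_eq_0_iff[of F "\<lambda>k. w k * w k"] by (simp add: inner_on_def)

lemma inner_on_normalize:
  assumes pos: "inner_on F w w > 0"
  shows "inner_on F (\<lambda>k. w k / sqrt (inner_on F w w)) (\<lambda>k. w k / sqrt (inner_on F w w)) = 1"
    and "inner_on F (\<lambda>k. w k / sqrt (inner_on F w w)) u = inner_on F w u / sqrt (inner_on F w w)"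
proof -
  define r where "r = sqrt (inner_on F w w)"
  have scaled: "(\<lambda>k. w k / r) = (\<lambda>k. inverse r * w k)"
    by (simp add: divide_inverse mult.commute)
  have "r * r = inner_on F w w" using pos by (simp add: r_def)
  then show "inner_on F (\<lambda>k. w k / sqrt (inner_on F w w)) (\<lambda>k. w k / sqrt (inner_on F w w)) = 1"
    using pos unfolding r_def[symmetric] scaled inner_on_scale_left inner_on_scale_right
    by (simp add: field_simps)
  show "inner_on F (\<lambda>k. w k / sqrt (inner_on F w w)) u = inner_on F w u / sqrt (inner_on F w w)"
    unfolding r_def[symmetric] scaled inner_on_scale_left by (simp add: divide_inverse)
qed

definition orthonormal_on :: "'k set \<Rightarrow> nat \<Rightarrow> (nat \<Rightarrow> 'k \<Rightarrow> real) \<Rightarrow> bool" where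
  "orthonormal_on F m a \<longleftrightarrow> (\<forall>i<m. \<forall>j<m. inner_on F (a i) (a j) = (if i = j then 1 else 0))"

definition residual :: "'k set \<Rightarrow> nat \<Rightarrow> (nat \<Rightarrow> 'k \<Rightarrow> real) \<Rightarrow> ('k \<Rightarrow> real) \<Rightarrow> 'k \<Rightarrow> real" where
  "residual F m a v = (\<lambda>k. v k - (\<Sum>i<m. inner_on F v (a i) * a i k))"

lemma inner_on_residual_left:
  "inner_on F c (residual F m a v) = inner_on F c v - (\<Sum>i<m. inner_on F v (a i) * inner_on F c (a i))"
  unfolding residual_def inner_on_diff_right inner_on_sum_right ..

lemma sum_orthonormal_on:
  assumes "orthonormal_on F m a" "j < m"
  shows "(\<Sum>i<m. \<alpha> i * inner_on F (a i) (a j)) = \<alpha> j"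
proof -
  have "(\<Sum>i<m. \<alpha> i * inner_on F (a i) (a j)) = (\<Sum>i<m. if i = j then \<alpha> j else 0)"
    using assms unfolding orthonormal_on_def by (intro sum.cong) auto
  then show ?thesis using assms(2) by simp
qed

lemma inner_on_residual_basis:
  "orthonormal_on F m a \<Longrightarrow> j < m \<Longrightarrow> inner_on F (residual F m a v) (a j) = 0"
  unfolding residual_def inner_on_diff_left inner_on_sum_left
  using sum_orthonormal_on[of F m a j "\<lambda>i. inner_on F v (a i)"] by simp

lemma inner_on_residual_self:
  assumes "orthonormal_on F m a"
  shows "inner_on F (residual F m a v) (residual F m a v) =
    inner_on F v v - (\<Sum>i<m. (inner_on F v (a i))\<^sup>2)"
proof -
  have "inner_on F (residual F m a v) (residual F m a v) = inner_on F (residual F m a v) v"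
    using assms by (simp add: inner_on_residual_left inner_on_residual_basis)
  also have "\<dots> = inner_on F v (residual F m a v)"
    by (rule inner_on_commute)
  finally show ?thesis
    by (simp add: inner_on_residual_left power2_eq_square)
qed

lemma orthonormal_on_extend:
  assumes "orthonormal_on F m a" "inner_on F b b = 1" "\<And>j. j < m \<Longrightarrow> inner_on F b (a j) = 0"
  shows "orthonormal_on F (Suc m) (a(m := b))"
  using assms inner_on_commute[of F "a _" b] unfolding orthonormal_on_def
  by (auto simp: less_Suc_eq)

lemma gram_schmidt_annihilator:
  assumes "finite F"
  shows "\<exists>m a. m \<le> length rs \<and> orthonormal_on F m a \<and>
           (\<forall>c. (\<forall>i<m. inner_on F c (a i) = 0) \<longrightarrow> (\<forall>r\<in>set rs. inner_on F c r = 0))"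
proof (induction rs)
  case Nil
  show ?case by (rule exI[of _ 0]) (simp add: orthonormal_on_def)
next
  case (Cons r rs)
  then obtain m a where m: "m \<le> length rs" and on: "orthonormal_on F m a"
    and ann: "\<And>c. \<forall>i<m. inner_on F c (a i) = 0 \<Longrightarrow> \<forall>r\<in>set rs. inner_on F c r = 0" by blast
  define w where "w = residual F m a r"
  have r_w: "inner_on F c r = inner_on F c w" if "\<forall>i<m. inner_on F c (a i) = 0" for c
    using that by (simp add: w_def inner_on_residual_left)
  show ?case
  proof (cases "inner_on F w w = 0")
    case True
    have "inner_on F c w = 0" for c
      using inner_on_self_eq_0[OF assms True] by (simp add: inner_on_def)
    then have "\<forall>r'\<in>set (r # rs). inner_on F c r' = 0" if "\<forall>i<m. inner_on F c (a i) = 0" for c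
      using r_w[OF that] ann[OF that] by simp
    moreover have "m \<le> length (r # rs)" using m by simp
    ultimately show ?thesis using on by blast
  next
    case False
    then have pos: "inner_on F w w > 0" using inner_on_self_nonneg[of F w] by linarith
    define b where "b = (\<lambda>k. w k / sqrt (inner_on F w w))"
    have b: "inner_on F b b = 1" "\<And>u. inner_on F b u = inner_on F w u / sqrt (inner_on F w w)"
      unfolding b_def by (rule inner_on_normalize[OF pos])+
    have "inner_on F b (a j) = 0" if "j < m" for j
      using b(2)[of "a j"] inner_on_residual_basis[OF on that] by (simp add: w_def)
    then have "orthonormal_on F (Suc m) (a(m := b))"
      by (rule orthonormal_on_extend[OF on b(1)])
    moreover have "\<forall>r'\<in>set (r # rs). inner_on F c r' = 0"
      if c: "\<forall>i<Suc m. inner_on F c ((a(m := b)) i) = 0" for c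
    proof -
      have ca: "\<forall>i<m. inner_on F c (a i) = 0"
      proof (intro allI impI)
        fix i assume "i < m"
        then show "inner_on F c (a i) = 0" using c[rule_format, of i] by simp
      qed
      have "inner_on F b c = 0" using c[rule_format, of m] inner_on_commute[of F c b] by simp
      then have "inner_on F w c = 0" using pos by (simp add: b(2))
      then have "inner_on F c w = 0" by (simp add: inner_on_commute)
      then show ?thesis using r_w[OF ca] ann[OF ca] by simp
    qed
    moreover have "Suc m \<le> length (r # rs)" using m by simp
    ultimately show ?thesis by blast
  qed
qed

text \<open>By the frame bound, the projections of the \<open>v x\<close> onto the span of an orthonormal
  family of at most \<open>n\<close> vectors have total squared length at most \<open>n B\<close>, so the residual of
  some \<open>v x\<close> has squared length above \<open>s - n B / card G\<close>.\<close>
lemma exists_unit_annihilator_large_inner: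
  fixes v :: "'x \<Rightarrow> 'k \<Rightarrow> real"
  assumes F: "finite F" and G: "finite G" "G \<noteq> {}"
    and vv: "\<And>x. x \<in> G \<Longrightarrow> inner_on F (v x) (v x) = s"
    and frame: "\<And>e. (\<Sum>x\<in>G. (inner_on F e (v x))\<^sup>2) \<le> B * inner_on F e e"
    and rs: "length rs \<le> n" and B: "B \<ge> 0"
    and t: "t \<ge> 0" "t\<^sup>2 < s - real n * B / real (card G)"
  shows "\<exists>x\<in>G. \<exists>c. (\<forall>r\<in>set rs. inner_on F c r = 0) \<and> inner_on F c c = 1 \<and> inner_on F c (v x) > t"
proof -
  obtain m a where m: "m \<le> length rs" and on: "orthonormal_on F m a"
    and ann: "\<And>c. \<forall>i<m. inner_on F c (a i) = 0 \<Longrightarrow> \<forall>r\<in>set rs. inner_on F c r = 0"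
    using gram_schmidt_annihilator[OF F] by blast
  have "(\<Sum>x\<in>G. \<Sum>i<m. (inner_on F (v x) (a i))\<^sup>2) = (\<Sum>i<m. \<Sum>x\<in>G. (inner_on F (a i) (v x))\<^sup>2)"
    by (subst sum.swap) (simp add: inner_on_commute)
  also have "\<dots> \<le> (\<Sum>i<m. B)"
  proof (rule sum_mono)
    fix i assume "i \<in> {..<m}"
    then have "inner_on F (a i) (a i) = 1" using on by (simp add: orthonormal_on_def)
    then show "(\<Sum>x\<in>G. (inner_on F (a i) (v x))\<^sup>2) \<le> B" using frame[of "a i"] by simp
  qed
  also have "\<dots> \<le> real n * B" using m rs B by (simp add: mult_right_mono)
  finally have proj: "(\<Sum>x\<in>G. \<Sum>i<m. (inner_on F (v x) (a i))\<^sup>2) \<le> real n * B" .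
  have "\<exists>x\<in>G. inner_on F (residual F m a (v x)) (residual F m a (v x)) > t\<^sup>2"
  proof (rule ccontr)
    assume "\<not> ?thesis"
    then have "s - (\<Sum>i<m. (inner_on F (v x) (a i))\<^sup>2) \<le> t\<^sup>2" if "x \<in> G" for x
      using that vv by (force simp: inner_on_residual_self[OF on])
    then have "(\<Sum>x\<in>G. s - (\<Sum>i<m. (inner_on F (v x) (a i))\<^sup>2)) \<le> (\<Sum>x\<in>G. t\<^sup>2)"
      by (rule sum_mono)
    then have "real (card G) * s - real n * B \<le> real (card G) * t\<^sup>2"
      using proj by (simp add: sum_subtractf)
    moreover have "real (card G) > 0" using G by (simp add: card_gt_0_iff)
    ultimately show False using t by (simp add: field_simps)
  qed
  then obtain x where x: "x \<in> G"
    and big: "inner_on F (residual F m a (v x)) (residual F m a (v x)) > t\<^sup>2" by blast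
  define w where "w = residual F m a (v x)"
  have pos: "inner_on F w w > 0" using big t unfolding w_def
    by (meson le_less_trans zero_le_power2)
  define c where "c = (\<lambda>k. w k / sqrt (inner_on F w w))"
  have c: "inner_on F c c = 1" "\<And>u. inner_on F c u = inner_on F w u / sqrt (inner_on F w w)"
    unfolding c_def by (rule inner_on_normalize[OF pos])+
  have "inner_on F w (v x) = inner_on F (v x) w" by (rule inner_on_commute)
  also have "\<dots> = inner_on F (v x) (v x) - (\<Sum>i<m. (inner_on F (v x) (a i))\<^sup>2)"
    by (simp add: w_def inner_on_residual_left power2_eq_square)
  also have "\<dots> = inner_on F w w"
    unfolding w_def by (rule inner_on_residual_self[OF on, symmetric])
  finally have "inner_on F w (v x) = inner_on F w w" .
  then have "inner_on F c (v x) = sqrt (inner_on F w w)"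
    using pos by (simp add: c real_div_sqrt)
  also have "\<dots> > t" using big t unfolding w_def by (simp add: real_less_rsqrt)
  finally have "inner_on F c (v x) > t" .
  moreover have "\<forall>i<m. inner_on F c (a i) = 0"
    using on by (simp add: c w_def inner_on_residual_basis)
  ultimately show ?thesis using x c ann by blast
qed

section \<open>The torus and the essential supremum norm\<close>

lemma torus_in_sets_lebesgue: "torus \<in> sets (lebesgue :: (real^'d::finite) measure)"
proof -
  have "torus = (\<Inter>j. {x::real^'d. 0 \<le> x $ j} \<inter> {x. x $ j < 1})" unfolding torus_def by auto
  also have "\<dots> \<in> sets lebesgue"
    by (intro sets.finite_INT) (auto intro!: sets.Int lebesgue_measurable_vimage_borel)
  finally show ?thesis .
qed

lemma space_Tmeas: "space Tmeas = torus"
  by (simp add: Tmeas_def space_restrict_space)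

lemma emeasure_Tmeas: "A \<subseteq> torus \<Longrightarrow> emeasure (Tmeas :: (real^'d::finite) measure) A = emeasure lebesgue A"
  unfolding Tmeas_def using torus_in_sets_lebesgue by (intro emeasure_restrict_space) auto

lemma box_subset_torus: "box 0 1 \<subseteq> (torus :: (real^'d::finite) set)"
  by (auto simp: torus_def mem_box_cart less_imp_le)

lemma torus_subset_cbox: "torus \<subseteq> cbox 0 (1 :: real^'d::finite)"
  by (auto simp: torus_def mem_box_cart less_imp_le)

lemma emeasure_Tmeas_open_pos:
  fixes U :: "(real^'d::finite) set"
  assumes U: "open U" "U \<inter> torus \<noteq> {}"
  shows "0 < emeasure Tmeas (U \<inter> box 0 1)"
proof -
  have "(1/2) *\<^sub>R 1 \<in> box 0 (1 :: real^'d)" by (simp add: mem_box_cart)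
  then have "box 0 (1 :: real^'d) \<noteq> {}" by blast
  then have "torus \<subseteq> closure (box 0 (1 :: real^'d))" using torus_subset_cbox by simp
  then have ne: "U \<inter> box 0 1 \<noteq> {}" using U open_Int_closure_eq_empty[of U] by blast
  have "open (U \<inter> box 0 1)" using U by auto
  then have "\<not> negligible (U \<inter> box 0 1)" using ne by (rule open_not_negligible)
  moreover have "U \<inter> box 0 1 \<in> sets lebesgue" using U by auto
  ultimately have "emeasure lebesgue (U \<inter> box 0 1) \<noteq> 0" by (simp add: negligible_iff_emeasure0)
  moreover have "U \<inter> box 0 1 \<subseteq> torus" using box_subset_torus by blast
  ultimately show ?thesis by (simp add: emeasure_Tmeas zero_less_iff_neq_zero)
qed

lemma esssup_ge_if_emeasure_pos:
  fixes f :: "'a \<Rightarrow> ereal"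
  assumes "emeasure M {x\<in>space M. f x > z} > 0"
  shows "z \<le> esssup M f"
proof (rule ccontr)
  assume "\<not> z \<le> esssup M f"
  then have "{x\<in>space M. f x > z} \<subseteq> {x\<in>space M. f x > esssup M f}" by auto
  moreover have "f \<in> borel_measurable M"
    using \<open>\<not> z \<le> esssup M f\<close> esssup_non_measurable by fastforce
  ultimately have "emeasure M {x\<in>space M. f x > z} \<le> emeasure M {x\<in>space M. f x > esssup M f}"
    by (intro emeasure_mono) measurable
  then show False using assms esssup_zero_measure[of M f] by simp
qed

lemma continuous_imp_measurable_Tmeas:
  fixes f :: "real^'d::finite \<Rightarrow> real"
  assumes "continuous_on UNIV f"
  shows "f \<in> borel_measurable Tmeas"
  unfolding Tmeas_def
  by (rule continuous_imp_measurable_on_sets_lebesgue[OF continuous_on_subset[OF assms]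
        torus_in_sets_lebesgue]) simp

lemma emeasure_space_Tmeas_pos: "0 < emeasure Tmeas (space Tmeas :: (real^'d::finite) set)"
proof -
  have "0 \<in> (torus :: (real^'d) set)" by (simp add: torus_def)
  then have "0 < emeasure Tmeas (UNIV \<inter> box 0 (1 :: real^'d))"
    by (intro emeasure_Tmeas_open_pos) auto
  also have "\<dots> \<le> emeasure Tmeas (space (Tmeas :: (real^'d) measure))"
    by (rule emeasure_space)
  finally show ?thesis .
qed

lemma Linf_norm_nonneg: "0 \<le> Linf_norm (g :: real^'d::finite \<Rightarrow> real)"
  unfolding Linf_norm_def
proof (rule dense_le)
  fix z :: ereal assume "z < 0"
  then have "{x \<in> space Tmeas. z < ereal \<bar>g x\<bar>} = space Tmeas"
    by (auto intro: less_le_trans[of _ 0])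
  then show "z \<le> esssup Tmeas (\<lambda>x. ereal \<bar>g x\<bar>)"
    using emeasure_space_Tmeas_pos by (intro esssup_ge_if_emeasure_pos) simp
qed

text \<open>The set where \<open>f > t\<close> is open, so it meets the torus in a set of positive measure,
  and at each of its points \<open>|f - \<phi>| > t\<close> or \<open>|-f - \<phi>| > t\<close>.\<close>
lemma Linf_norm_diff_ge_or_neg_diff_ge:
  fixes f :: "real^'d::finite \<Rightarrow> real"
  assumes f: "continuous_on UNIV f" and x0: "x0 \<in> torus" "f x0 > t"
    and \<phi>[measurable]: "\<phi> \<in> borel_measurable Tmeas"
  shows "ereal t \<le> Linf_norm (\<lambda>x. f x - \<phi> x) \<or> ereal t \<le> Linf_norm (\<lambda>x. - f x - \<phi> x)"
proof -
  note [measurable] = continuous_imp_measurable_Tmeas[OF f]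
  define B where "B = {y. t < f y} \<inter> box 0 1"
  define A1 where "A1 = {x\<in>space Tmeas. ereal t < ereal \<bar>f x - \<phi> x\<bar>}"
  define A2 where "A2 = {x\<in>space Tmeas. ereal t < ereal \<bar>- f x - \<phi> x\<bar>}"
  have A: "A1 \<in> sets Tmeas" "A2 \<in> sets Tmeas" unfolding A1_def A2_def by measurable
  have "open {y. t < f y}" using f by (simp add: open_Collect_less continuous_on_const)
  then have "0 < emeasure Tmeas B" unfolding B_def using x0 by (intro emeasure_Tmeas_open_pos) auto
  also have "\<dots> \<le> emeasure Tmeas (A1 \<union> A2)"
    using A box_subset_torus by (intro emeasure_mono) (auto simp: B_def A1_def A2_def space_Tmeas)
  also have "\<dots> \<le> emeasure Tmeas A1 + emeasure Tmeas A2"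
    using A by (rule emeasure_subadditive)
  finally have "0 < emeasure Tmeas A1 \<or> 0 < emeasure Tmeas A2"
    by (metis add.left_neutral not_gr_zero)
  then show ?thesis unfolding Linf_norm_def A1_def A2_def
    by (auto intro: esssup_ge_if_emeasure_pos)
qed

section \<open>Finite expansions in the Hilbert space\<close>

definition psi_sum :: "(nat \<Rightarrow> real) \<Rightarrow> (int^'d) set \<Rightarrow> (int^'d \<Rightarrow> real) \<Rightarrow> real^'d \<Rightarrow> real" where
  "psi_sum lam F c = (\<lambda>x. \<Sum>k\<in>F. c k * psi lam k x)"

lemma series_restrict:
  assumes "finite F"
  shows "series lam (\<lambda>k. if k \<in> F then c k else 0) = psi_sum lam F c"
proof
  fix x
  have "(\<Sum>\<^sub>\<infinity>k. (if k \<in> F then c k else 0) * psi lam k x) = (\<Sum>\<^sub>\<infinity>k\<in>F. c k * psi lam k x)"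
    by (rule infsum_cong_neutral) auto
  then show "series lam (\<lambda>k. if k \<in> F then c k else 0) x = psi_sum lam F c x"
    using assms by (simp add: series_def psi_sum_def)
qed

lemma infsum_sq_restrict:
  fixes c :: "'k \<Rightarrow> real"
  shows "finite F \<Longrightarrow> (\<Sum>\<^sub>\<infinity>k. (if k \<in> F then c k else 0)\<^sup>2) = (\<Sum>k\<in>F. (c k)\<^sup>2)"
  by (subst infsum_cong_neutral[where T = F and g = "\<lambda>k. (c k)\<^sup>2"]) auto

lemma l2coeff_restrict: "finite F \<Longrightarrow> l2coeff (\<lambda>k. if k \<in> F then c k else 0)"
  unfolding l2coeff_def
  by (subst summable_on_cong_neutral[where T = F and g = "\<lambda>k. (c k)\<^sup>2"]) auto

lemma Hnorm_series_le:
  assumes "l2coeff c"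
  shows "Hnorm lam (series lam c) \<le> sqrt (\<Sum>\<^sub>\<infinity>k. (c k)\<^sup>2)"
  unfolding Hnorm_def
proof (rule cInf_lower)
  show "bdd_below {sqrt (\<Sum>\<^sub>\<infinity>k. (c' k)\<^sup>2) |c'. l2coeff c' \<and> series lam c = series lam c'}"
    by (rule bdd_belowI[of _ 0]) (auto intro!: infsum_nonneg)
qed (use assms in blast)

lemma psi_sum_in_Hspace: "finite F \<Longrightarrow> psi_sum lam F c \<in> Hspace lam"
  unfolding Hspace_def mem_Collect_eq
  by (rule exI[of _ "\<lambda>k. if k \<in> F then c k else 0"]) (simp add: series_restrict l2coeff_restrict)

lemma psi_sum_in_Hball:
  assumes "finite F" "(\<Sum>k\<in>F. (c k)\<^sup>2) \<le> 1"
  shows "psi_sum lam F c \<in> Hball lam"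
proof -
  have "Hnorm lam (psi_sum lam F c) \<le> sqrt (\<Sum>k\<in>F. (c k)\<^sup>2)"
    using Hnorm_series_le[OF l2coeff_restrict[OF assms(1)], of lam c]
    by (simp add: series_restrict[OF assms(1)] infsum_sq_restrict[OF assms(1)])
  also have "\<dots> \<le> 1" using assms(2) by simp
  finally show ?thesis unfolding Hball_def using psi_sum_in_Hspace[OF assms(1)] by simp
qed

lemma uminus_psi_sum: "- psi_sum lam F c x = psi_sum lam F (\<lambda>k. - c k) x"
  by (simp add: psi_sum_def sum_negf)

lemma clf_linear:
  "clf lam L \<Longrightarrow> f \<in> Hspace lam \<Longrightarrow> g \<in> Hspace lam \<Longrightarrow>
    L (\<lambda>x. a * f x + b * g x) = a * L f + b * L g"
  unfolding clf_def by blast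

lemma clf_psi_sum:
  assumes L: "clf lam L" and F: "finite F"
  shows "L (psi_sum lam F c) = (\<Sum>k\<in>F. c k * L (psi lam k))"
  using F
proof (induction F rule: finite_induct)
  case empty
  have "psi_sum lam {} c \<in> Hspace lam" by (rule psi_sum_in_Hspace) simp
  from clf_linear[OF L this this, of 0 0] show ?case by (simp add: psi_sum_def)
next
  case (insert j F)
  have "psi lam j = psi_sum lam {j} (\<lambda>_. 1)" by (simp add: psi_sum_def)
  then have "psi lam j \<in> Hspace lam" by (simp add: psi_sum_in_Hspace)
  from clf_linear[OF L psi_sum_in_Hspace[OF insert(1)] this, where a = 1 and b = "c j"]
  have "L (\<lambda>x. 1 * psi_sum lam F c x + c j * psi lam j x) = L (psi_sum lam F c) + c j * L (psi lam j)"
    by simp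
  moreover have "psi_sum lam (insert j F) c = (\<lambda>x. 1 * psi_sum lam F c x + c j * psi lam j x)"
    using insert by (simp add: psi_sum_def add.commute)
  ultimately show ?case using insert by (simp add: add.commute)
qed

lemma continuous_on_psi1: "continuous_on UNIV (\<lambda>x::real^'d::finite. psi1 lam p (x $ j))"
proof -
  consider "p = 0" | "p < 0" | "p > 0" by linarith
  then show ?thesis by cases (simp_all add: psi1_def continuous_intros)
qed

lemma continuous_on_psi: "continuous_on UNIV (psi lam k :: real^'d::finite \<Rightarrow> real)"
  unfolding psi_def[abs_def] by (intro continuous_on_prod continuous_on_psi1)

lemma continuous_on_psi_sum: "continuous_on UNIV (psi_sum lam F c :: real^'d::finite \<Rightarrow> real)"
  unfolding psi_sum_def by (intro continuous_intros continuous_on_psi)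

lemma sum_lam_sq_le_1:
  fixes lam :: "nat \<Rightarrow> real"
  assumes "(\<lambda>k. (lam k)\<^sup>2) sums 1"
  shows "(\<Sum>i\<in>I. (lam i)\<^sup>2) \<le> 1"
proof (cases "finite I")
  case True
  then show ?thesis using assms sum_le_suminf[of "\<lambda>k. (lam k)\<^sup>2" I]
    by (simp add: sums_iff)
qed simp

lemma sum_psi_sq_le_1:
  fixes X :: "(int^'d::finite) set"
  assumes sum1: "(\<lambda>k. (lam k)\<^sup>2) sums 1" and X: "finite X"
  shows "(\<Sum>k\<in>X. (psi lam k x)\<^sup>2) \<le> 1"
proof -
  obtain N where N: "X \<subseteq> freq_box N" using finite_subset_freq_box[OF X] by blast
  have "(\<Sum>k\<in>X. (psi lam k x)\<^sup>2) \<le> (\<Sum>k\<in>freq_box N. (psi lam k x)\<^sup>2)"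
    by (rule sum_mono2[OF finite_freq_box N]) simp
  also have "\<dots> = (\<Sum>i\<le>N. (lam i)\<^sup>2) ^ CARD('d)" by (rule sum_psi_sq_freq_box)
  also have "\<dots> \<le> 1" using sum_lam_sq_le_1[OF sum1] by (intro power_le_one) (auto intro: sum_nonneg)
  finally show ?thesis .
qed

lemma sum_abs_coeff_psi_le:
  fixes c :: "int^'d::finite \<Rightarrow> real"
  assumes sum1: "(\<lambda>k. (lam k)\<^sup>2) sums 1" and c: "l2coeff c" and X: "finite X"
  shows "(\<Sum>k\<in>X. \<bar>c k * psi lam k x\<bar>) \<le> sqrt (\<Sum>\<^sub>\<infinity>k. (c k)\<^sup>2)"
proof (rule real_le_rsqrt)
  have "(\<Sum>k\<in>X. \<bar>c k * psi lam k x\<bar>)\<^sup>2 = (\<Sum>k\<in>X. \<bar>c k\<bar> * \<bar>psi lam k x\<bar>)\<^sup>2"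
    by (simp add: abs_mult)
  also have "\<dots> \<le> (\<Sum>k\<in>X. (c k)\<^sup>2) * (\<Sum>k\<in>X. (psi lam k x)\<^sup>2)"
    using Cauchy_Schwarz_ineq_sum[of "\<lambda>k. \<bar>c k\<bar>" "\<lambda>k. \<bar>psi lam k x\<bar>" X] by simp
  also have "\<dots> \<le> (\<Sum>\<^sub>\<infinity>k. (c k)\<^sup>2) * 1"
  proof (rule mult_mono)
    show "(\<Sum>k\<in>X. (c k)\<^sup>2) \<le> (\<Sum>\<^sub>\<infinity>k. (c k)\<^sup>2)"
      using c X unfolding l2coeff_def by (intro finite_sum_le_infsum) auto
  qed (simp_all add: sum_psi_sq_le_1[OF sum1 X] infsum_nonneg sum_nonneg)
  finally show "(\<Sum>k\<in>X. \<bar>c k * psi lam k x\<bar>)\<^sup>2 \<le> (\<Sum>\<^sub>\<infinity>k. (c k)\<^sup>2)" by simp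
qed

lemma abs_summable_series_terms:
  fixes c :: "int^'d::finite \<Rightarrow> real"
  assumes sum1: "(\<lambda>k. (lam k)\<^sup>2) sums 1" and c: "l2coeff c"
  shows "(\<lambda>k. norm (c k * psi lam k x)) summable_on UNIV"
  unfolding abs_summable_iff_bdd_above
  by (rule bdd_aboveI[of _ "sqrt (\<Sum>\<^sub>\<infinity>k. (c k)\<^sup>2)"]) (auto intro!: sum_abs_coeff_psi_le[OF sum1 c])

lemma abs_series_le:
  fixes c :: "int^'d::finite \<Rightarrow> real"
  assumes sum1: "(\<lambda>k. (lam k)\<^sup>2) sums 1" and c: "l2coeff c"
  shows "\<bar>series lam c x\<bar> \<le> sqrt (\<Sum>\<^sub>\<infinity>k. (c k)\<^sup>2)"
proof -
  have "\<bar>series lam c x\<bar> \<le> (\<Sum>\<^sub>\<infinity>k. norm (c k * psi lam k x))"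
    unfolding series_def using norm_infsum_bound[OF abs_summable_series_terms[OF sum1 c]] by simp
  also have "\<dots> \<le> sqrt (\<Sum>\<^sub>\<infinity>k. (c k)\<^sup>2)"
    using abs_summable_series_terms[OF sum1 c]
    by (intro infsum_le_finite_sums) (auto simp: sum_abs_coeff_psi_le[OF sum1 c])
  finally show ?thesis .
qed

lemma filterlim_freq_box: "filterlim (\<lambda>N. freq_box N :: (int^'d::finite) set) (finite_subsets_at_top UNIV) sequentially"
  unfolding filterlim_finite_subsets_at_top
proof (intro allI impI)
  fix X :: "(int^'d) set" assume "finite X \<and> X \<subseteq> UNIV"
  then obtain N0 where "X \<subseteq> freq_box N0" using finite_subset_freq_box by blast
  then show "\<forall>\<^sub>F N in sequentially. finite (freq_box N) \<and> X \<subseteq> freq_box N \<and> freq_box N \<subseteq> UNIV"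
    unfolding eventually_sequentially using freq_box_mono finite_freq_box by blast
qed

lemma series_measurable:
  fixes c :: "int^'d::finite \<Rightarrow> real"
  assumes sum1: "(\<lambda>k. (lam k)\<^sup>2) sums 1" and c: "l2coeff c"
  shows "series lam c \<in> borel_measurable Tmeas"
proof (rule borel_measurable_LIMSEQ_real)
  fix x :: "real^'d"
  have "(\<lambda>k. c k * psi lam k x) summable_on UNIV"
    using abs_summable_series_terms[OF sum1 c] summable_on_iff_abs_summable_on_real by blast
  from has_sum_infsum[OF this]
  have "((\<lambda>X. \<Sum>k\<in>X. c k * psi lam k x) \<longlongrightarrow> series lam c x) (finite_subsets_at_top UNIV)"
    unfolding has_sum_def series_def .
  from filterlim_compose[OF this filterlim_freq_box]
  show "(\<lambda>N. psi_sum lam (freq_box N) c x) \<longlonglongrightarrow> series lam c x" by (simp add: psi_sum_def)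
qed (rule continuous_imp_measurable_Tmeas[OF continuous_on_psi_sum])

lemma Hball_abs_le_1:
  fixes f :: "real^'d::finite \<Rightarrow> real"
  assumes sum1: "(\<lambda>k. (lam k)\<^sup>2) sums 1" and f: "f \<in> Hball lam"
  shows "\<bar>f x\<bar> \<le> 1"
proof -
  let ?S = "{sqrt (\<Sum>\<^sub>\<infinity>k. (c k)\<^sup>2) | c. l2coeff c \<and> f = series lam c}"
  have "?S \<noteq> {}" using f unfolding Hball_def Hspace_def by blast
  then have "\<bar>f x\<bar> \<le> Inf ?S"
  proof (rule cInf_greatest)
    fix y assume "y \<in> ?S"
    then obtain c where "l2coeff c" "f = series lam c" "y = sqrt (\<Sum>\<^sub>\<infinity>k. (c k)\<^sup>2)" by blast
    then show "\<bar>f x\<bar> \<le> y" using abs_series_le[OF sum1] by simp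
  qed
  also have "\<dots> \<le> 1" using f unfolding Hball_def Hnorm_def by simp
  finally show ?thesis .
qed

lemma Hball_measurable:
  fixes f :: "real^'d::finite \<Rightarrow> real"
  assumes sum1: "(\<lambda>k. (lam k)\<^sup>2) sums 1" and f: "f \<in> Hball lam"
  shows "f \<in> borel_measurable Tmeas"
proof -
  obtain c where "l2coeff c" "f = series lam c" using f unfolding Hball_def Hspace_def by blast
  then show ?thesis using series_measurable[OF sum1] by simp
qed

section \<open>Lower bounds for all admissible methods\<close>

lemma sum_sq_inner_psi_grid_le:
  fixes e :: "int^'d::finite \<Rightarrow> real"
  assumes M: "M = 2 * N + 1" and msq: "\<And>k::int^'d. psi_msq lam k \<le> b"
  shows "(\<Sum>x\<in>grid M. (inner_on (freq_box N) e (\<lambda>k. psi lam k x))\<^sup>2) \<le>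
    (real M ^ CARD('d) * b) * inner_on (freq_box N) e e"
proof -
  let ?F = "freq_box N :: (int^'d) set"
  have "(\<Sum>x\<in>grid M. (inner_on ?F e (\<lambda>k. psi lam k x))\<^sup>2) =
        (\<Sum>x\<in>grid M. \<Sum>k\<in>?F. \<Sum>l\<in>?F. e k * e l * (psi lam k x * psi lam l x))"
    unfolding inner_on_def power2_eq_square by (simp add: sum_product mult_ac)
  also have "\<dots> = (\<Sum>k\<in>?F. \<Sum>l\<in>?F. e k * e l * (\<Sum>x\<in>grid M. psi lam k x * psi lam l x))"
    by (simp add: sum.swap[of _ "grid M"] sum_distrib_left)
  also have "\<dots> = (\<Sum>k\<in>?F. e k * e k * (real M ^ CARD('d) * psi_msq lam k))"
    using M by (simp add: sum_psi_psi_grid finite_freq_box if_distrib cong: if_cong)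
  also have "\<dots> \<le> (\<Sum>k\<in>?F. e k * e k * (real M ^ CARD('d) * b))"
    by (intro sum_mono mult_left_mono) (auto simp: msq)
  also have "\<dots> = (real M ^ CARD('d) * b) * inner_on ?F e e"
    unfolding inner_on_def by (simp add: sum_distrib_left mult_ac)
  finally show ?thesis .
qed

lemma exists_fooling_psi_sum:
  fixes lam :: "nat \<Rightarrow> real" and r :: "nat \<Rightarrow> int^'d::finite \<Rightarrow> real"
  assumes sum1: "(\<lambda>k. (lam k)\<^sup>2) sums 1"
    and msq: "\<And>k::int^'d. psi_msq lam k \<le> b ^ CARD('d)" and b: "b \<ge> 0"
    and t: "t \<ge> 0" "t\<^sup>2 < 1 - real n * b ^ CARD('d)"
  shows "\<exists>F c x0. finite F \<and> (\<Sum>k\<in>F. (c k)\<^sup>2) = 1 \<and> (\<forall>i<n. (\<Sum>k\<in>F. c k * r i k) = 0) \<and>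
    x0 \<in> torus \<and> t < psi_sum lam F c x0"
proof -
  have "(\<lambda>N. \<Sum>i<N. (lam i)\<^sup>2) \<longlonglongrightarrow> 1" using sum1 by (simp add: sums_def)
  then have "(\<lambda>N. \<Sum>i<Suc N. (lam i)\<^sup>2) \<longlonglongrightarrow> 1" by (rule LIMSEQ_Suc)
  then have "(\<lambda>N. \<Sum>i\<le>N. (lam i)\<^sup>2) \<longlonglongrightarrow> 1" by (simp only: lessThan_Suc_atMost)
  from tendsto_power[OF this, of "CARD('d)"]
  have "(\<lambda>N. (\<Sum>i\<le>N. (lam i)\<^sup>2) ^ CARD('d)) \<longlonglongrightarrow> 1" by simp
  moreover have "t\<^sup>2 + real n * b ^ CARD('d) < 1" using t by simp
  ultimately have "\<forall>\<^sub>F N in sequentially. t\<^sup>2 + real n * b ^ CARD('d) < (\<Sum>i\<le>N. (lam i)\<^sup>2) ^ CARD('d)"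
    by (rule order_tendstoD(1))
  then obtain N where N: "t\<^sup>2 + real n * b ^ CARD('d) < (\<Sum>i\<le>N. (lam i)\<^sup>2) ^ CARD('d)"
    by (auto simp: eventually_sequentially)
  define M where "M = 2 * N + 1"
  let ?F = "freq_box N :: (int^'d) set" and ?G = "grid M :: (real^'d) set"
  have "card ?G = M ^ CARD('d)" "M > 0" by (simp_all add: M_def card_grid)
  then have G: "?G \<noteq> {}" "real (card ?G) = real M ^ CARD('d)" "real M ^ CARD('d) > 0"
    by (auto simp del: of_nat_power simp: of_nat_power[symmetric])
  have "\<exists>x\<in>?G. \<exists>c. (\<forall>r'\<in>set (map r [0..<n]). inner_on ?F c r' = 0) \<and> inner_on ?F c c = 1 \<and>
      inner_on ?F c (\<lambda>k. psi lam k x) > t"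
  proof (rule exists_unit_annihilator_large_inner)
    show "inner_on ?F (\<lambda>k. psi lam k x) (\<lambda>k. psi lam k x) = (\<Sum>i\<le>N. (lam i)\<^sup>2) ^ CARD('d)" for x
      using sum_psi_sq_freq_box[where N = N and lam = lam and x = x] by (simp add: inner_on_def power2_eq_square)
    show "(\<Sum>x\<in>?G. (inner_on ?F e (\<lambda>k. psi lam k x))\<^sup>2) \<le> (real M ^ CARD('d) * b ^ CARD('d)) * inner_on ?F e e"
      for e using M_def msq by (rule sum_sq_inner_psi_grid_le)
    show "t\<^sup>2 < (\<Sum>i\<le>N. (lam i)\<^sup>2) ^ CARD('d) - real n * (real M ^ CARD('d) * b ^ CARD('d)) / real (card ?G)"
      using N G by simp
  qed (use G b t in \<open>simp_all add: finite_freq_box finite_grid\<close>)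
  then obtain x0 c where "x0 \<in> ?G" "\<forall>i<n. inner_on ?F c (r i) = 0" "inner_on ?F c c = 1"
    "inner_on ?F c (\<lambda>k. psi lam k x0) > t" by (auto simp: atLeast0LessThan)
  then show ?thesis using grid_subset_torus finite_freq_box
    by (intro exI[of _ ?F] exI[of _ c] exI[of _ x0])
      (auto simp: inner_on_def psi_sum_def power2_eq_square)
qed

lemma exists_fooling_function:
  fixes lam :: "nat \<Rightarrow> real" and L :: "nat \<Rightarrow> (real^'d::finite \<Rightarrow> real) \<Rightarrow> real"
  assumes sum1: "(\<lambda>k. (lam k)\<^sup>2) sums 1"
    and msq: "\<And>k::int^'d. psi_msq lam k \<le> b ^ CARD('d)" and b: "b \<ge> 0"
    and L: "\<forall>i<n. clf lam (L i)" and \<phi>: "\<phi> \<in> borel_measurable Tmeas"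
    and t: "t \<ge> 0" "t\<^sup>2 < 1 - real n * b ^ CARD('d)"
  shows "\<exists>f\<in>Hball lam. (\<forall>i<n. L i f = 0) \<and> ereal t \<le> Linf_norm (\<lambda>x. f x - \<phi> x)"
proof -
  obtain F c x0 where F: "finite F" "(\<Sum>k\<in>F. (c k)\<^sup>2) = 1"
    and ann: "\<forall>i<n. (\<Sum>k\<in>F. c k * L i (psi lam k)) = 0"
    and x0: "x0 \<in> torus" "t < psi_sum lam F c x0"
    using exists_fooling_psi_sum[OF sum1 msq b t, of "\<lambda>i k. L i (psi lam k)"] by blast
  have fooling: "psi_sum lam F c' \<in> Hball lam \<and> (\<forall>i<n. L i (psi_sum lam F c') = 0)"
    if "c' = c \<or> c' = (\<lambda>k. - c k)" for c'
    using that F ann L by (auto simp: psi_sum_in_Hball clf_psi_sum sum_negf)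
  have "ereal t \<le> Linf_norm (\<lambda>x. psi_sum lam F c x - \<phi> x) \<or>
      ereal t \<le> Linf_norm (\<lambda>x. - psi_sum lam F c x - \<phi> x)"
    using continuous_on_psi_sum x0 \<phi> by (rule Linf_norm_diff_ge_or_neg_diff_ge)
  then show ?thesis
  proof
    assume "ereal t \<le> Linf_norm (\<lambda>x. psi_sum lam F c x - \<phi> x)"
    then show ?thesis using fooling[of c] by blast
  next
    assume "ereal t \<le> Linf_norm (\<lambda>x. - psi_sum lam F c x - \<phi> x)"
    then show ?thesis using fooling[of "\<lambda>k. - c k"] by (auto simp: uminus_psi_sum)
  qed
qed

lemma method_error_ge:
  fixes lam :: "nat \<Rightarrow> real" and L :: "nat \<Rightarrow> (real^'d::finite \<Rightarrow> real) \<Rightarrow> real"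
  assumes sum1: "(\<lambda>k. (lam k)\<^sup>2) sums 1"
    and msq: "\<And>k::int^'d. psi_msq lam k \<le> b ^ CARD('d)" and b: "b \<ge> 0"
    and adm: "admissible lam n L phi"
  shows "ereal (sqrt (max 0 (1 - real n * b ^ CARD('d)))) \<le> method_error lam n L phi"
proof (rule dense_le)
  fix y assume y: "y < ereal (sqrt (max 0 (1 - real n * b ^ CARD('d))))"
  have err: "Linf_norm (\<lambda>x. f x - phi (map (\<lambda>i. L i f) [0..<n]) x) \<le> method_error lam n L phi"
    if "f \<in> Hball lam" for f unfolding method_error_def using that by (rule SUP_upper)
  show "y \<le> method_error lam n L phi"
  proof (cases "y \<le> 0")
    case True
    have "(\<lambda>x. 0) \<in> Hball lam" using psi_sum_in_Hball[of "{}" "\<lambda>_. 0" lam] by (simp add: psi_sum_def)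
    from order_trans[OF Linf_norm_nonneg err[OF this]] show ?thesis using True by simp
  next
    case False
    then obtain t where yt: "y = ereal t" "0 < t" "t < sqrt (max 0 (1 - real n * b ^ CARD('d)))"
      using y by (cases y) auto
    then have "t\<^sup>2 < (sqrt (max 0 (1 - real n * b ^ CARD('d))))\<^sup>2"
      by (intro power_strict_mono) auto
    then have t: "t\<^sup>2 < 1 - real n * b ^ CARD('d)"
      using yt(2) by (simp add: max_def split: if_splits)
    define \<phi> where "\<phi> = phi (replicate n 0)"
    have "\<phi> \<in> borel_measurable Tmeas" and L: "\<forall>i<n. clf lam (L i)"
      using adm unfolding admissible_def \<phi>_def by simp_all
    then obtain f where f: "f \<in> Hball lam" and Lf: "\<forall>i<n. L i f = 0"
      and ft: "ereal t \<le> Linf_norm (\<lambda>x. f x - \<phi> x)"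
      using exists_fooling_function[OF sum1 msq b L _ less_imp_le[OF yt(2)] t] by blast
    have "map (\<lambda>i. L i f) [0..<n] = replicate n 0" using Lf by (intro nth_equalityI) auto
    then have "Linf_norm (\<lambda>x. f x - \<phi> x) \<le> method_error lam n L phi"
      using err[OF f] unfolding \<phi>_def by simp
    then show ?thesis using ft yt(1) by simp
  qed
qed

lemma initial_error_le_1:
  assumes sum1: "(\<lambda>k. (lam k)\<^sup>2) sums 1"
  shows "initial_error TYPE('d::finite) lam \<le> 1"
  unfolding initial_error_def
proof (rule SUP_least)
  fix f :: "real^'d \<Rightarrow> real" assume f: "f \<in> Hball lam"
  note [measurable] = Hball_measurable[OF sum1 f]
  show "Linf_norm f \<le> 1" unfolding Linf_norm_def
    by (rule esssup_I) (auto simp: Hball_abs_le_1[OF sum1 f])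
qed

lemma initial_error_ge_1:
  assumes sum1: "(\<lambda>k. (lam k)\<^sup>2) sums 1"
    and msq: "\<And>k::int^'d::finite. psi_msq lam k \<le> b ^ CARD('d)" and b: "b \<ge> 0"
  shows "1 \<le> initial_error TYPE('d) lam"
proof -
  let ?L = "\<lambda>_ _. 0 :: real" and ?phi = "\<lambda>_ (_::real^'d). 0 :: real"
  have "Linf_norm (\<lambda>_::real^'d. 0 :: real) \<le> 0"
    unfolding Linf_norm_def by (rule esssup_I) auto
  also have "(0 :: ereal) < \<infinity>" by simp
  finally have "Linf_norm (\<lambda>_::real^'d. 0 :: real) < \<infinity>" .
  then have "admissible lam 0 ?L ?phi" by (simp add: admissible_def)
  \<comment> \<open>the zero algorithm without information has the initial error as its error\<close>
  from method_error_ge[OF sum1 msq b this]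
  show ?thesis by (simp add: method_error_def initial_error_def one_ereal_def)
qed

lemma ereal_le_INF_enat:
  assumes "\<And>n. n \<in> S \<Longrightarrow> a \<le> real n"
  shows "ereal a \<le> ereal_of_enat (INF n\<in>S. enat n)"
proof (cases "S = {}")
  case False
  then have n0: "Inf S \<in> S" by (rule Inf_nat_def1)
  have "(INF n\<in>S. enat n) = enat (Inf S)"
  proof (rule antisym)
    show "(INF n\<in>S. enat n) \<le> enat (Inf S)" using n0 by (rule INF_lower)
    show "enat (Inf S) \<le> (INF n\<in>S. enat n)" by (rule INF_greatest) (simp add: cInf_lower)
  qed
  then show ?thesis using assms[OF n0] by simp
qed (simp add: top_enat_def)

lemma n_det_ge:
  fixes lam :: "nat \<Rightarrow> real"
  assumes sum1: "(\<lambda>k. (lam k)\<^sup>2) sums 1"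
    and msq: "\<And>k::int^'d::finite. psi_msq lam k \<le> b ^ CARD('d)" and b: "b > 0"
    and eps: "0 < eps" "eps < 1"
  shows "ereal (inverse (b ^ CARD('d)) * (1 - eps)\<^sup>2) \<le> ereal_of_enat (n_det TYPE('d) lam eps)"
proof -
  define S where "S = {n. \<exists>(L :: nat \<Rightarrow> (real^'d \<Rightarrow> real) \<Rightarrow> real) phi.
    admissible lam n L phi \<and> method_error lam n L phi \<le> ereal eps}"
  have "inverse (b ^ CARD('d)) * (1 - eps)\<^sup>2 \<le> real n" if n: "n \<in> S" for n
  proof -
    obtain L :: "nat \<Rightarrow> (real^'d \<Rightarrow> real) \<Rightarrow> real" and phi
      where "admissible lam n L phi" "method_error lam n L phi \<le> ereal eps"
      using n unfolding S_def by blast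
    then have "ereal (sqrt (max 0 (1 - real n * b ^ CARD('d)))) \<le> ereal eps"
      using method_error_ge[OF sum1 msq less_imp_le[OF b]] by (blast intro: order_trans)
    then have "sqrt (max 0 (1 - real n * b ^ CARD('d))) \<le> eps" by simp
    then have "(sqrt (max 0 (1 - real n * b ^ CARD('d))))\<^sup>2 \<le> eps\<^sup>2"
      by (intro power_mono) simp_all
    then have "max 0 (1 - real n * b ^ CARD('d)) \<le> eps\<^sup>2" by simp
    moreover have "(1 - eps)\<^sup>2 \<le> 1 - eps\<^sup>2" using eps by (simp add: power2_eq_square algebra_simps)
    ultimately have "(1 - eps)\<^sup>2 \<le> real n * b ^ CARD('d)" by simp
    then show ?thesis using b by (simp add: field_simps)
  qed
  then show ?thesis unfolding n_det_def S_def[symmetric] by (rule ereal_le_INF_enat)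
qed

lemma det_lower_bounds_if_psi_msq_le:
  fixes lam :: "nat \<Rightarrow> real"
  assumes sum1: "(\<lambda>k. (lam k)\<^sup>2) sums 1"
    and msq: "\<And>k::int^'d::finite. psi_msq lam k \<le> b ^ CARD('d)" and b: "b > 0"
  shows "det_lower_bounds TYPE('d) lam b"
  unfolding det_lower_bounds_def
proof (intro conjI allI impI)
  show "initial_error TYPE('d) lam = 1"
    using initial_error_le_1[OF sum1, where 'd = 'd] initial_error_ge_1[OF sum1 msq] b
    by (simp add: antisym)
  show "ereal (sqrt (max 0 (1 - real n * b ^ CARD('d)))) \<le> e_det TYPE('d) lam n" for n
    unfolding e_det_def using method_error_ge[OF sum1 msq] b by (auto intro!: INF_greatest)
qed (use n_det_ge[OF sum1 msq b] in auto)

section \<open>The constant beta and Korobov weights\<close>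

lemma bdd_above_beta_set:
  fixes lam :: "nat \<Rightarrow> real"
  assumes "\<And>k. (lam k)\<^sup>2 \<le> C"
  shows "bdd_above (insert ((lam 0)\<^sup>2) {(lam k)\<^sup>2 / 2 | k. k \<ge> 1})"
proof (rule bdd_aboveI)
  fix y assume "y \<in> insert ((lam 0)\<^sup>2) {(lam k)\<^sup>2 / 2 | k. k \<ge> 1}"
  then obtain k where "y = (lam k)\<^sup>2 \<or> y = (lam k)\<^sup>2 / 2" by blast
  then show "y \<le> C" using assms[of k] zero_le_power2[of "lam k"] by linarith
qed

lemma lam0_sq_le_beta:
  fixes lam :: "nat \<Rightarrow> real"
  shows "(\<And>k. (lam k)\<^sup>2 \<le> C) \<Longrightarrow> (lam 0)\<^sup>2 \<le> beta lam"
  unfolding beta_def by (rule cSup_upper[OF _ bdd_above_beta_set]) auto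

lemma lam_sq_half_le_beta:
  fixes lam :: "nat \<Rightarrow> real"
  shows "(\<And>k. (lam k)\<^sup>2 \<le> C) \<Longrightarrow> k \<ge> 1 \<Longrightarrow> (lam k)\<^sup>2 / 2 \<le> beta lam"
  unfolding beta_def by (rule cSup_upper[OF _ bdd_above_beta_set]) auto

lemma beta_le:
  fixes lam :: "nat \<Rightarrow> real"
  shows "(lam 0)\<^sup>2 \<le> c \<Longrightarrow> (\<And>k. k \<ge> 1 \<Longrightarrow> (lam k)\<^sup>2 / 2 \<le> c) \<Longrightarrow> beta lam \<le> c"
  unfolding beta_def by (rule cSup_least) blast+

lemma beta_eq_max:
  fixes lam :: "nat \<Rightarrow> real"
  assumes "\<And>k. k \<ge> 1 \<Longrightarrow> (lam k)\<^sup>2 \<le> (lam 1)\<^sup>2"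
  shows "beta lam = max ((lam 0)\<^sup>2) ((lam 1)\<^sup>2 / 2)"
proof (rule antisym)
  have bound: "(lam k)\<^sup>2 \<le> max ((lam 0)\<^sup>2) ((lam 1)\<^sup>2)" for k
    using assms[of k] by (cases "k = 0") auto
  show "beta lam \<le> max ((lam 0)\<^sup>2) ((lam 1)\<^sup>2 / 2)"
    using assms by (intro beta_le) (auto simp: le_max_iff_disj)
  show "max ((lam 0)\<^sup>2) ((lam 1)\<^sup>2 / 2) \<le> beta lam"
    using lam0_sq_le_beta[of lam, OF bound] lam_sq_half_le_beta[of lam, OF bound, of 1] by simp
qed

lemma psi_msq_le_beta_power:
  fixes lam :: "nat \<Rightarrow> real"
  assumes "\<And>k. (lam k)\<^sup>2 \<le> C"
  shows "psi_msq lam (k :: int^'d::finite) \<le> beta lam ^ CARD('d)"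
proof -
  have "0 \<le> psi1_msq lam p \<and> psi1_msq lam p \<le> beta lam" for p
    using lam0_sq_le_beta[of lam, OF assms] lam_sq_half_le_beta[of lam, OF assms, of "nat \<bar>p\<bar>"]
    by (cases "p = 0") (auto simp: psi1_msq_def)
  then have "psi_msq lam k \<le> (\<Prod>j\<in>(UNIV::'d set). beta lam)"
    unfolding psi_msq_def by (intro prod_mono) auto
  then show ?thesis by simp
qed

theorem det_lower_bounds_beta:
  fixes lam :: "nat \<Rightarrow> real"
  assumes pos: "\<And>k. lam k > 0" and lam0: "lam 0 < 1" and sum1: "(\<lambda>k. (lam k)\<^sup>2) sums 1"
  shows "0 < beta lam \<and> beta lam < 1 \<and> det_lower_bounds TYPE('d::finite) lam (beta lam)"
proof -
  have le1: "(lam k)\<^sup>2 \<le> 1" for k using sum_lam_sq_le_1[OF sum1, of "{k}"] by simp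
  have "0 < (lam 0)\<^sup>2" using pos[of 0] by simp
  then have beta_pos: "0 < beta lam" using lam0_sq_le_beta[of lam, OF le1] by linarith
  have "(lam 0)\<^sup>2 < 1" using pos[of 0] lam0 by (simp add: power_less_one_iff)
  moreover have "beta lam \<le> max ((lam 0)\<^sup>2) (1 / 2)"
    using le1 by (intro beta_le) (auto simp: le_max_iff_disj)
  ultimately have "beta lam < 1" by simp
  then show ?thesis
    using beta_pos det_lower_bounds_if_psi_msq_le[OF sum1 psi_msq_le_beta_power[OF le1]] by blast
qed

lemma kor_lambda_sq:
  assumes "k \<ge> 1" "b1 \<ge> 0"
  shows "(kor_lambda r b0 b1 k)\<^sup>2 = b1 * real k powr (- (2 * r))"
proof -
  have "(real k powr (- r))\<^sup>2 = real k powr (- (2 * r))"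
    using assms by (simp add: power2_eq_square flip: powr_add)
  then show ?thesis using assms by (simp add: kor_lambda_def power_mult_distrib)
qed

lemma kor_lambda_facts:
  fixes r b0 b1 :: real
  assumes r: "r > 1/2" and b0: "b0 > 0" and b1: "b1 > 0"
    and eq: "b0 + b1 * (\<Sum>k. 1 / real (Suc k) powr (2 * r)) = 1"
  shows "\<And>k. kor_lambda r b0 b1 k > 0" "kor_lambda r b0 b1 0 < 1"
    "(\<lambda>k. (kor_lambda r b0 b1 k)\<^sup>2) sums 1" "beta (kor_lambda r b0 b1) = max b0 (b1 / 2)"
proof -
  let ?g = "\<lambda>k. 1 / real (Suc k) powr (2 * r)" and ?\<kappa> = "kor_lambda r b0 b1"
  have "summable (\<lambda>n. real n powr (- (2 * r)))" using r by (simp add: summable_real_powr_iff)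
  then have g: "summable ?g" by (subst (asm) summable_Suc_iff[symmetric]) (simp add: powr_minus_divide)
  show "?\<kappa> k > 0" for k using b0 b1 by (simp add: kor_lambda_def)
  have "0 < b1 * suminf ?g" using b1 suminf_pos[OF g] by simp
  then show "?\<kappa> 0 < 1" using b0 eq by (simp add: kor_lambda_def real_sqrt_lt_1_iff)
  have "(\<lambda>k. (?\<kappa> (Suc k))\<^sup>2) = (\<lambda>k. b1 * ?g k)"
    using b1 by (simp add: kor_lambda_sq powr_minus_divide del: of_nat_Suc)
  then have "(\<lambda>k. (?\<kappa> (Suc k))\<^sup>2) sums (b1 * suminf ?g)"
    using sums_mult[OF summable_sums[OF g]] by simp
  then have "(\<lambda>k. (?\<kappa> k)\<^sup>2) sums (b1 * suminf ?g + (?\<kappa> 0)\<^sup>2)" by (rule sums_Suc)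
  then show "(\<lambda>k. (?\<kappa> k)\<^sup>2) sums 1" using eq b0 by (simp add: kor_lambda_def add.commute)
  have "(?\<kappa> k)\<^sup>2 \<le> (?\<kappa> 1)\<^sup>2" if "k \<ge> 1" for k
  proof -
    have "real k powr (- (2 * r)) \<le> real k powr 0" using that r by (intro powr_mono) auto
    then show ?thesis using that b1 by (simp add: kor_lambda_sq)
  qed
  then show "beta ?\<kappa> = max b0 (b1 / 2)"
    using b0 b1 by (simp add: beta_eq_max kor_lambda_sq) (simp add: kor_lambda_def)
qed

theorem theorem3p1:
  fixes lam :: "nat \<Rightarrow> real"
  assumes pos: "\<And>k. lam k > 0"
    and lam0: "0 \<le> lam 0" "lam 0 < 1"
    and sum1: "(\<lambda>k. (lam k)\<^sup>2) sums 1"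
  shows "0 < beta lam \<and> beta lam < 1 \<and> det_lower_bounds TYPE('d::finite) lam (beta lam) \<and>
         (\<forall>r b0 b1. r > 1/2 \<and> b0 > 0 \<and> b1 > 0 \<and>
           b0 + b1 * (\<Sum>k. 1 / real (Suc k) powr (2 * r)) = 1 \<longrightarrow>
           beta (kor_lambda r b0 b1) = max b0 (b1 / 2) \<and>
           det_lower_bounds TYPE('d::finite) (kor_lambda r b0 b1) (max b0 (b1 / 2)))"
proof -
  have "beta (kor_lambda r b0 b1) = max b0 (b1 / 2) \<and>
      det_lower_bounds TYPE('d) (kor_lambda r b0 b1) (max b0 (b1 / 2))"
    if "r > 1/2" "b0 > 0" "b1 > 0" "b0 + b1 * (\<Sum>k. 1 / real (Suc k) powr (2 * r)) = 1"
    for r b0 b1 :: real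
  proof -
    note kor = kor_lambda_facts[OF that]
    show ?thesis using det_lower_bounds_beta[OF kor(1-3), where 'd = 'd] kor(4) by simp
  qed
  then show ?thesis using det_lower_bounds_beta[OF pos lam0(2) sum1] by blast
qed

end
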